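(* The Lambda word $\Lambda_\theta$ is rich; that is, every nonempty prefix of $\Lambda_\theta$ has a nonempty palindromic suffix that occurs exactly once in that prefix, and equivalently every finite factor $w$ of $\Lambda_\theta$ contains exactly $|w|+1$ distinct palindromic factors (counting the empty word).
   Context: Fix an irrational $\theta$ with $1<\theta<2$. Let $S(\theta)=\{i+j\theta : i,j\in\mathbb{N}_0\}$ and let $s_0<s_1<s_2<\cdots$ be its elements in increasing order. Put $\delta(n)=s_{n+1}-s_n$. Let $\lambda$ be the map from the set of values $\{\delta(n):n\ge0\}$ to $\mathbb{N}_0$ that numbers the distinct values in order of first occurrence: $\lambda(\delta(0))=0$, and the $m$-th distinct value to appear in the sequence $\delta(0),\delta(1),\dots$ (counting from $m=0$) receives label $m$. The Lambda word is the right-infinite word $\Lambda_\theta=\lambda(\delta(0))\lambda(\delta(1))\lambda(\delta(2))\cdots$ over the alphabet $\mathbb{N}_0$. A factor is a finite block of consecutive letters; a palindrome is a finite word equal to its reversal; $|w|$ denotes the length of $w$. A finite word of length $n$ is rich if it has exactly $n+1$ distinct palindromic factors (including the empty word), and an infinite word is rich if all its finite factors are rich. *)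

theory Defs
  imports Complex_Main "HOL-Library.Sublist"
begin

definition Sset :: "real \<Rightarrow> real set" where
  "Sset \<theta> = {real i + real j * \<theta> | i j :: nat. True}"

definition s_seq :: "real \<Rightarrow> nat \<Rightarrow> real" where
  "s_seq \<theta> n = (THE x. x \<in> Sset \<theta> \<and> card {y \<in> Sset \<theta>. y < x} = n
                        \<and> finite {y \<in> Sset \<theta>. y < x})"

definition delta :: "real \<Rightarrow> nat \<Rightarrow> real" where
  "delta \<theta> n = s_seq \<theta> (Suc n) - s_seq \<theta> n"

text \<open>Labelling by order of first occurrence: the label of delta n is the number of
  distinct values occurring before the first occurrence of the value delta n.\<close>
definition lambda_word :: "real \<Rightarrow> nat \<Rightarrow> nat" where
  "lambda_word \<theta> n =
     (let k = (LEAST k. delta \<theta> k = delta \<theta> n) in card (delta \<theta> ` {..<k}))"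

definition factor_of :: "nat list \<Rightarrow> (nat \<Rightarrow> nat) \<Rightarrow> bool" where
  "factor_of w x \<longleftrightarrow> (\<exists>i. w = map x [i..<i + length w])"

definition palindrome :: "'a list \<Rightarrow> bool" where
  "palindrome w \<longleftrightarrow> rev w = w"

definition pal_factors :: "'a list \<Rightarrow> 'a list set" where
  "pal_factors w = {u. sublist u w \<and> palindrome u}"

definition rich_finite :: "'a list \<Rightarrow> bool" where
  "rich_finite w \<longleftrightarrow> card (pal_factors w) = length w + 1"

definition rich_infinite :: "(nat \<Rightarrow> nat) \<Rightarrow> bool" where
  "rich_infinite x \<longleftrightarrow> (\<forall>w. factor_of w x \<longrightarrow> rich_finite w)"

definition occ_count :: "'a list \<Rightarrow> 'a list \<Rightarrow> nat" where
  "occ_count u w = card {i. i + length u \<le> length w \<and> take (length u) (drop i w) = u}"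

end

theory Submission
  imports Defs
begin

text \<open>A word is rich as soon as every prefix ends in a palindrome occurring only once in it:
  appending a letter creates at most one new palindromic factor (the longest palindromic suffix),
  so such prefixes have the maximal number of palindromes, and richness passes to factors.

  For \<open>\<Lambda>\<^sub>\<theta>\<close>, let \<open>y = s\<^sub>n\<close>, \<open>A = \<lfloor>y\<rfloor>\<close>, \<open>B = \<lfloor>y/\<theta>\<rfloor>\<close> and \<open>c = A + B\<theta>\<close>. Every element
  \<open>i + j\<theta> \<le> y\<close> of \<open>S(\<theta>)\<close> has \<open>i \<le> A\<close>, \<open>j \<le> B\<close>, so \<open>z \<mapsto> c - z\<close> maps \<open>S(\<theta>) \<inter> [c - y, y]\<close>
  onto itself; hence the gaps between \<open>s\<^sub>m = c - y\<close> and \<open>s\<^sub>n\<close> form a palindrome. It occurs only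
  once: an earlier occurrence would translate the window by some \<open>\<tau> < 0\<close>, moving both \<open>A\<close> and
  \<open>B\<theta>\<close> into \<open>S(\<theta>)\<close>, which irrationality of \<open>\<theta>\<close> forbids.\<close>

lemma finite_pal_factors: "finite (pal_factors w)"
proof -
  have "pal_factors w \<subseteq> {u. set u \<subseteq> set w \<and> length u \<le> length w}"
    by (auto simp: pal_factors_def dest: set_mono_sublist sublist_length_le)
  moreover have "finite {u. set u \<subseteq> set w \<and> length u \<le> length w}"
    by (rule finite_lists_length_le) simp
  ultimately show ?thesis by (rule finite_subset)
qed

lemma pal_factors_rev: "pal_factors (rev w) = pal_factors w"
  unfolding pal_factors_def palindrome_def by (metis sublist_rev)

lemma pal_factors_mono: "sublist v w \<Longrightarrow> pal_factors v \<subseteq> pal_factors w"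
  unfolding pal_factors_def by (auto intro: sublist_order.order_trans)

lemma pal_factors_Nil: "pal_factors [] = {[]}"
  by (auto simp: pal_factors_def palindrome_def)

text \<open>A palindromic suffix of a palindrome is also its prefix, hence reappears further left.\<close>
lemma palindrome_suffix_shorter_sublist:
  assumes "suffix u (w @ [c])" "suffix v (w @ [c])" "palindrome u" "palindrome v"
    and "length u < length v"
  shows "sublist u w"
proof -
  have "suffix u v" using assms suffix_length_suffix by (metis less_imp_le)
  hence "prefix u v" using assms(3,4) by (simp add: suffix_to_prefix palindrome_def)
  then obtain r where v: "v = u @ r" by (auto simp: prefix_def)
  with assms(5) have "r \<noteq> []" by auto
  then obtain r' d where r: "r = r' @ [d]" by (metis rev_exhaust)
  from assms(2) obtain z where "w @ [c] = z @ v" by (auto simp: suffix_def)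
  hence "w = z @ u @ r'" using v r by simp
  thus ?thesis by auto
qed

lemma card_pal_factors_snoc_le: "card (pal_factors (w @ [c])) \<le> Suc (card (pal_factors w))"
proof (cases "pal_factors (w @ [c]) \<subseteq> pal_factors w")
  case True
  thus ?thesis using card_mono[OF finite_pal_factors True] by simp
next
  case False
  then obtain u where u: "u \<in> pal_factors (w @ [c])" "u \<notin> pal_factors w" by blast
  have new_suffix: "suffix v (w @ [c]) \<and> palindrome v \<and> \<not> sublist v w"
    if "v \<in> pal_factors (w @ [c]) - pal_factors w" for v
    using that by (auto simp: pal_factors_def sublist_snoc)
  have "pal_factors (w @ [c]) \<subseteq> insert u (pal_factors w)"
  proof
    fix v assume v: "v \<in> pal_factors (w @ [c])"
    show "v \<in> insert u (pal_factors w)"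
    proof (rule ccontr)
      assume "v \<notin> insert u (pal_factors w)"
      with u v new_suffix[of u] new_suffix[of v]
      have su: "suffix u (w @ [c])" "palindrome u" "\<not> sublist u w"
        and sv: "suffix v (w @ [c])" "palindrome v" "\<not> sublist v w" and "u \<noteq> v" by auto
      have "length u \<noteq> length v"
        using su(1) sv(1) \<open>u \<noteq> v\<close> suffix_length_suffix suffix_order.antisym by (metis order_refl)
      hence "length u < length v \<or> length v < length u" by arith
      thus False
        using palindrome_suffix_shorter_sublist[OF su(1) sv(1) su(2) sv(2)]
          palindrome_suffix_shorter_sublist[OF sv(1) su(1) sv(2) su(2)] su(3) sv(3)
        by blast
    qed
  qed
  hence "card (pal_factors (w @ [c])) \<le> card (insert u (pal_factors w))"
    by (rule card_mono[rotated]) (simp add: finite_pal_factors)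
  also have "\<dots> \<le> Suc (card (pal_factors w))" by (simp add: card_insert_if finite_pal_factors)
  finally show ?thesis .
qed

lemma card_pal_factors_Cons_le: "card (pal_factors (c # w)) \<le> Suc (card (pal_factors w))"
  using card_pal_factors_snoc_le[of "rev w" c] by (metis pal_factors_rev rev.simps(2) rev_rev_ident)

lemma card_pal_factors_le: "card (pal_factors w) \<le> length w + 1"
proof (induction w rule: rev_induct)
  case (snoc c w)
  thus ?case using card_pal_factors_snoc_le[of w c] by simp
qed (simp add: pal_factors_Nil)

lemma card_pal_factors_append_le: "card (pal_factors (x @ w)) \<le> card (pal_factors w) + length x"
proof (induction x)
  case (Cons a x)
  thus ?case using card_pal_factors_Cons_le[of a "x @ w"] by simp
qed simp

lemma card_pal_factors_snoc_new:
  assumes "u \<in> pal_factors (w @ [c])" "u \<notin> pal_factors w"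
  shows "card (pal_factors (w @ [c])) = Suc (card (pal_factors w))"
proof -
  have "insert u (pal_factors w) \<subseteq> pal_factors (w @ [c])"
    using assms(1) pal_factors_mono[of w "w @ [c]"] by auto
  hence "card (insert u (pal_factors w)) \<le> card (pal_factors (w @ [c]))"
    by (rule card_mono[OF finite_pal_factors])
  hence "Suc (card (pal_factors w)) \<le> card (pal_factors (w @ [c]))"
    using assms(2) by (simp add: finite_pal_factors)
  thus ?thesis using card_pal_factors_snoc_le[of w c] by simp
qed

lemma occ_count_one_suffix_not_sublist_butlast:
  assumes "occ_count u (w @ [c]) = 1" "suffix u (w @ [c])"
  shows "\<not> sublist u w"
proof
  assume "sublist u w"
  then obtain a b where w: "w = a @ u @ b" by (auto simp: sublist_def)
  from assms(2) obtain z where z: "w @ [c] = z @ u" by (auto simp: suffix_def)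
  let ?M = "{i. i + length u \<le> length (w @ [c]) \<and> take (length u) (drop i (w @ [c])) = u}"
  have "length a \<in> ?M" by (simp add: w)
  moreover have "length z \<in> ?M" by (simp add: z)
  moreover have "length a < length z"
  proof -
    have "length w + 1 = length z + length u" using arg_cong[OF z, of length] by simp
    thus ?thesis using w by simp
  qed
  moreover have "finite ?M" by (rule finite_subset[of _ "{..length (w @ [c])}"]) auto
  ultimately have "card {length a, length z} \<le> card ?M" by (intro card_mono) auto
  thus False using assms(1) \<open>length a < length z\<close> by (simp add: occ_count_def)
qed

lemma card_pal_factors_prefix:
  assumes "\<forall>n\<ge>1. \<exists>u. suffix u (map x [0..<n]) \<and> u \<noteq> [] \<and> palindrome u
                 \<and> occ_count u (map x [0..<n]) = 1"
  shows "card (pal_factors (map x [0..<n])) = n + 1"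
proof (induction n)
  case 0
  thus ?case by (simp add: pal_factors_Nil)
next
  case (Suc n)
  let ?w = "map x [0..<n]"
  obtain u where u: "suffix u (?w @ [x n])" "palindrome u" "occ_count u (?w @ [x n]) = 1"
    using assms[rule_format, of "Suc n"] by auto
  have "u \<in> pal_factors (?w @ [x n])" using u by (auto simp: pal_factors_def suffix_imp_sublist)
  moreover have "u \<notin> pal_factors ?w"
    using occ_count_one_suffix_not_sublist_butlast[OF u(3,1)] by (simp add: pal_factors_def)
  ultimately show ?case using Suc.IH card_pal_factors_snoc_new[of u ?w "x n"] by simp
qed

theorem rich_infinite_if_prefixes_unioccurrent_palindromic_suffix:
  assumes "\<forall>n\<ge>1. \<exists>u. suffix u (map x [0..<n]) \<and> u \<noteq> [] \<and> palindrome u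
                 \<and> occ_count u (map x [0..<n]) = 1"
  shows "rich_infinite x"
  unfolding rich_infinite_def
proof (intro allI impI)
  fix w assume "factor_of w x"
  then obtain i where w: "w = map x [i..<i + length w]" by (auto simp: factor_of_def)
  have "map x [0..<i + length w] = map x [0..<i] @ w"
    using w upt_add_eq_append[of 0 i "length w"] by simp
  hence "i + length w + 1 \<le> card (pal_factors w) + i"
    using card_pal_factors_prefix[OF assms, of "i + length w"]
      card_pal_factors_append_le[of "map x [0..<i]" w] by simp
  thus "rich_finite w" using card_pal_factors_le[of w] by (simp add: rich_finite_def)
qed

definition Sset_rank :: "real \<Rightarrow> real \<Rightarrow> nat" where
  "Sset_rank \<theta> x = card {y \<in> Sset \<theta>. y < x}"

context
  fixes \<theta> :: real
  assumes \<theta>_pos: "0 < \<theta>"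
begin

lemma Sset_iff: "x \<in> Sset \<theta> \<longleftrightarrow> (\<exists>i j::nat. x = real i + real j * \<theta>)"
  by (auto simp: Sset_def)

lemma Sset_nonneg: "x \<in> Sset \<theta> \<Longrightarrow> 0 \<le> x"
  using \<theta>_pos by (auto simp: Sset_iff)

lemma finite_Sset_less: "finite {y \<in> Sset \<theta>. y < x}"
proof -
  let ?N = "nat \<lceil>x\<rceil>" and ?M = "nat \<lceil>x / \<theta>\<rceil>"
  have "{y \<in> Sset \<theta>. y < x} \<subseteq> (\<lambda>(i, j). real i + real j * \<theta>) ` ({..?N} \<times> {..?M})"
  proof
    fix y assume "y \<in> {y \<in> Sset \<theta>. y < x}"
    then obtain i j :: nat where y: "y = real i + real j * \<theta>" "y < x" by (auto simp: Sset_iff)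
    have "real i < x" "real j * \<theta> < x" using y \<theta>_pos by (smt (verit) of_nat_0_le_iff zero_le_mult_iff)+
    hence "real i < x" "real j < x / \<theta>" using \<theta>_pos by (simp_all add: pos_less_divide_eq)
    hence "i \<le> ?N" "j \<le> ?M" by linarith+
    thus "y \<in> (\<lambda>(i, j). real i + real j * \<theta>) ` ({..?N} \<times> {..?M})" using y by force
  qed
  thus ?thesis by (rule finite_subset) auto
qed

lemma Sset_rank_less: "x \<in> Sset \<theta> \<Longrightarrow> x < x' \<Longrightarrow> Sset_rank \<theta> x < Sset_rank \<theta> x'"
  unfolding Sset_rank_def by (rule psubset_card_mono[OF finite_Sset_less]) auto

lemma Sset_rank_inj:
  "x \<in> Sset \<theta> \<Longrightarrow> x' \<in> Sset \<theta> \<Longrightarrow> Sset_rank \<theta> x = Sset_rank \<theta> x' \<Longrightarrow> x = x'"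
  by (metis linorder_neqE_linordered_idom Sset_rank_less less_irrefl)

lemma Sset_rank_surj: "\<exists>x\<in>Sset \<theta>. Sset_rank \<theta> x = n"
proof (induction n)
  case 0
  have "(0::real) \<in> Sset \<theta>" by (auto simp: Sset_iff intro: exI[of _ 0])
  moreover have "{y \<in> Sset \<theta>. y < 0} = {}" using Sset_nonneg by force
  ultimately show ?case unfolding Sset_rank_def by (metis card.empty)
next
  case (Suc n)
  then obtain x where x: "x \<in> Sset \<theta>" "Sset_rank \<theta> x = n" by blast
  let ?T = "{y \<in> Sset \<theta>. x < y \<and> y \<le> x + 1}"
  have "x + 1 \<in> Sset \<theta>"
    using x(1) by (auto simp: Sset_iff) (metis of_nat_Suc add.commute add.left_commute)
  hence "x + 1 \<in> ?T" by simp
  have fin: "finite ?T" by (rule finite_subset[OF _ finite_Sset_less[of "x + 2"]]) auto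
  have Min_in_T: "Min ?T \<in> ?T" using Min_in[OF fin] \<open>x + 1 \<in> ?T\<close> by blast
  have "y < x" if "y \<in> Sset \<theta>" "y < Min ?T" "y \<noteq> x" for y
  proof (rule ccontr)
    assume "\<not> y < x"
    hence "y \<in> ?T" using that Min_in_T by auto
    thus False using Min_le[OF fin] that(2) by fastforce
  qed
  hence "{y \<in> Sset \<theta>. y < Min ?T} = insert x {y \<in> Sset \<theta>. y < x}"
    using Min_in_T x(1) by auto
  hence "Sset_rank \<theta> (Min ?T) = Suc n"
    using x finite_Sset_less[of x] by (simp add: Sset_rank_def)
  thus ?case using Min_in_T by blast
qed

lemma s_seq_in_Sset: "s_seq \<theta> n \<in> Sset \<theta>"
  and Sset_rank_s_seq: "Sset_rank \<theta> (s_seq \<theta> n) = n"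
proof -
  obtain x where x: "x \<in> Sset \<theta>" "Sset_rank \<theta> x = n" using Sset_rank_surj by blast
  have "s_seq \<theta> n = x"
    unfolding s_seq_def
  proof (rule the_equality)
    show "x \<in> Sset \<theta> \<and> card {y \<in> Sset \<theta>. y < x} = n \<and> finite {y \<in> Sset \<theta>. y < x}"
      using x finite_Sset_less by (simp add: Sset_rank_def)
  qed (use x Sset_rank_inj in \<open>simp add: Sset_rank_def\<close>)
  thus "s_seq \<theta> n \<in> Sset \<theta>" "Sset_rank \<theta> (s_seq \<theta> n) = n" using x by simp_all
qed

lemma s_seq_Sset_rank: "x \<in> Sset \<theta> \<Longrightarrow> s_seq \<theta> (Sset_rank \<theta> x) = x"
  using Sset_rank_inj s_seq_in_Sset Sset_rank_s_seq by blast

lemma s_seq_less_iff: "s_seq \<theta> n < s_seq \<theta> n' \<longleftrightarrow> n < n'"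
  by (metis linorder_neqE_linordered_idom not_less_iff_gr_or_eq Sset_rank_less s_seq_in_Sset
      Sset_rank_s_seq)

lemma s_seq_le_iff: "s_seq \<theta> n \<le> s_seq \<theta> n' \<longleftrightarrow> n \<le> n'"
  by (meson not_le s_seq_less_iff)

lemma s_seq_Suc_le: "x \<in> Sset \<theta> \<Longrightarrow> s_seq \<theta> n < x \<Longrightarrow> s_seq \<theta> (Suc n) \<le> x"
  by (metis Suc_leI s_seq_less_iff s_seq_le_iff s_seq_Sset_rank)

lemma Sset_between_s_seq:
  "x \<in> Sset \<theta> \<Longrightarrow> s_seq \<theta> m \<le> x \<Longrightarrow> x \<le> s_seq \<theta> n
    \<Longrightarrow> \<exists>k. m \<le> k \<and> k \<le> n \<and> x = s_seq \<theta> k"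
  by (metis s_seq_le_iff s_seq_Sset_rank)

lemma s_seq_reflect:
  assumes reflect: "\<And>z. z \<in> Sset \<theta> \<Longrightarrow> z \<le> s_seq \<theta> n \<Longrightarrow> c - z \<in> Sset \<theta>"
    and sm: "s_seq \<theta> m = c - s_seq \<theta> n" and "k \<le> n - m" and "m \<le> n"
  shows "c - s_seq \<theta> (m + k) = s_seq \<theta> (n - k)"
  using \<open>k \<le> n - m\<close>
proof (induction k)
  case 0
  thus ?case using sm by simp
next
  case (Suc k)
  let ?s = "s_seq \<theta>"
  have IH: "c - ?s (m + k) = ?s (n - k)" and nk: "n - k = Suc (n - Suc k)"
    using Suc by simp_all
  have "c - ?s (m + Suc k) \<le> ?s (n - Suc k)"
  proof (rule ccontr)
    have "m + Suc k \<le> n" using Suc.prems \<open>m \<le> n\<close> by simp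
    hence "c - ?s (m + Suc k) \<in> Sset \<theta>" by (simp add: reflect s_seq_in_Sset s_seq_le_iff)
    moreover assume "\<not> ?thesis"
    ultimately have "?s (Suc (n - Suc k)) \<le> c - ?s (m + Suc k)" by (simp add: s_seq_Suc_le)
    hence "?s (n - k) \<le> c - ?s (m + Suc k)" using nk by simp
    thus False using IH s_seq_less_iff[of "m + k" "m + Suc k"] by simp
  qed
  moreover have "?s (Suc (m + k)) \<le> c - ?s (n - Suc k)"
  proof (rule s_seq_Suc_le)
    show "c - ?s (n - Suc k) \<in> Sset \<theta>" by (simp add: reflect s_seq_in_Sset s_seq_le_iff)
    show "?s (m + k) < c - ?s (n - Suc k)" using IH nk s_seq_less_iff[of "n - Suc k" "n - k"] by simp
  qed
  ultimately show ?case by simp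
qed

end

lemma s_seq_shift:
  assumes "\<forall>t<l. delta \<theta> (i + t) = delta \<theta> (m + t)" "t \<le> l"
  shows "s_seq \<theta> (i + t) = s_seq \<theta> (m + t) + (s_seq \<theta> i - s_seq \<theta> m)"
  using assms(2)
proof (induction t)
  case (Suc t)
  hence "delta \<theta> (i + t) = delta \<theta> (m + t)" using assms(1) by simp
  thus ?case using Suc by (simp add: delta_def algebra_simps)
qed simp

lemma lambda_word_eq_iff: "lambda_word \<theta> a = lambda_word \<theta> b \<longleftrightarrow> delta \<theta> a = delta \<theta> b"
proof
  let ?first = "\<lambda>a. LEAST k. delta \<theta> k = delta \<theta> a"
  have first: "delta \<theta> (?first a) = delta \<theta> a" for a by (rule LeastI) (rule refl)
  have less: "lambda_word \<theta> a < lambda_word \<theta> b" if "?first a < ?first b" for a b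
  proof -
    have "delta \<theta> (?first a) \<notin> delta \<theta> ` {..<?first a}"
      using first not_less_Least by fastforce
    moreover have "delta \<theta> (?first a) \<in> delta \<theta> ` {..<?first b}" using that by simp
    moreover have "delta \<theta> ` {..<?first a} \<subseteq> delta \<theta> ` {..<?first b}"
      using that by (intro image_mono) simp
    ultimately have "delta \<theta> ` {..<?first a} \<subset> delta \<theta> ` {..<?first b}" by blast
    hence "card (delta \<theta> ` {..<?first a}) < card (delta \<theta> ` {..<?first b})"
      by (rule psubset_card_mono[rotated]) simp
    thus ?thesis by (simp add: lambda_word_def)
  qed
  assume "lambda_word \<theta> a = lambda_word \<theta> b"
  hence "?first a = ?first b" using less[of a b] less[of b a] by fastforce
  thus "delta \<theta> a = delta \<theta> b" using first by metis
qed (simp add: lambda_word_def)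

definition reflection_centre :: "real \<Rightarrow> real \<Rightarrow> real" where
  "reflection_centre \<theta> y = real (nat \<lfloor>y\<rfloor>) + real (nat \<lfloor>y / \<theta>\<rfloor>) * \<theta>"

context
  fixes \<theta> :: real
  assumes irrational: "\<theta> \<notin> \<rat>" and \<theta>_pos: "0 < \<theta>"
begin

lemma Sset_coords_unique:
  assumes "of_int a + of_int b * \<theta> = of_int a' + of_int b' * \<theta>"
  shows "a = a' \<and> b = b'"
proof -
  have "b = b'"
  proof (rule ccontr)
    assume "b \<noteq> b'"
    with assms have "\<theta> = of_int (a' - a) / of_int (b - b')" by (simp add: field_simps)
    thus False using irrational by simp
  qed
  with assms show ?thesis by simp
qed

lemma reflection_centre_diff_in_Sset:
  assumes "z \<in> Sset \<theta>" "z \<le> y"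
  shows "reflection_centre \<theta> y - z \<in> Sset \<theta>"
proof -
  obtain i j :: nat where z: "z = real i + real j * \<theta>" using assms(1) by (auto simp: Sset_def)
  have "real i \<le> y" "real j * \<theta> \<le> y" using z assms(2) \<theta>_pos by (smt (verit) of_nat_0_le_iff zero_le_mult_iff)+
  hence "real i \<le> y" "real j \<le> y / \<theta>" using \<theta>_pos by (simp_all add: pos_le_divide_eq)
  hence "i \<le> nat \<lfloor>y\<rfloor>" "j \<le> nat \<lfloor>y / \<theta>\<rfloor>" by linarith+
  hence "reflection_centre \<theta> y - z = real (nat \<lfloor>y\<rfloor> - i) + real (nat \<lfloor>y / \<theta>\<rfloor> - j) * \<theta>"
    using z by (simp add: reflection_centre_def of_nat_diff algebra_simps)
  thus ?thesis by (auto simp: Sset_def)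
qed

lemma reflection_centre_bounds:
  assumes "0 \<le> y"
  shows "real (nat \<lfloor>y\<rfloor>) \<le> y" "real (nat \<lfloor>y / \<theta>\<rfloor>) * \<theta> \<le> y"
proof -
  show "real (nat \<lfloor>y\<rfloor>) \<le> y" using assms by linarith
  have "real (nat \<lfloor>y / \<theta>\<rfloor>) \<le> y / \<theta>" using assms \<theta>_pos by simp
  thus "real (nat \<lfloor>y / \<theta>\<rfloor>) * \<theta> \<le> y" using \<theta>_pos by (simp add: pos_le_divide_eq)
qed

lemma reflection_centre_less:
  assumes "0 < y"
  shows "reflection_centre \<theta> y - y < y"
proof (rule ccontr)
  define A B where "A = nat \<lfloor>y\<rfloor>" and "B = nat \<lfloor>y / \<theta>\<rfloor>"
  assume "\<not> ?thesis"
  moreover have "real A \<le> y" "real B * \<theta> \<le> y"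
    unfolding A_def B_def using reflection_centre_bounds assms by simp_all
  ultimately have "real A = y" "real B * \<theta> = y"
    unfolding reflection_centre_def A_def[symmetric] B_def[symmetric] by linarith+
  hence "int A = 0" using Sset_coords_unique[of "int A" 0 0 "int B"] by simp
  thus False using \<open>real A = y\<close> assms by simp
qed

text \<open>Subtracting the two representations forces \<open>a\<^sub>1 = a + a\<^sub>2\<close>, so \<open>\<tau> = a\<^sub>2 + b\<^sub>1\<theta>\<close>.\<close>
lemma Sset_translate_nonneg:
  assumes "real a + \<tau> \<in> Sset \<theta>" "real b * \<theta> + \<tau> \<in> Sset \<theta>"
  shows "0 \<le> \<tau>"
proof -
  obtain a1 b1 a2 b2 :: nat where 1: "real a + \<tau> = real a1 + real b1 * \<theta>"
    and 2: "real b * \<theta> + \<tau> = real a2 + real b2 * \<theta>"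
    using assms by (auto simp: Sset_def)
  have "of_int (int a1 - int a) + of_int (int b1) * \<theta> = of_int (int a2) + of_int (int b2 - int b) * \<theta>"
    using 1 2 by (simp add: algebra_simps)
  hence "int a1 - int a = int a2" using Sset_coords_unique by blast
  hence "\<tau> = real a2 + real b1 * \<theta>" using 1 by (simp add: algebra_simps)
  thus ?thesis using \<theta>_pos by simp
qed

text \<open>An earlier copy of the gaps translates \<open>S(\<theta>) \<inter> [s\<^sub>m, s\<^sub>n]\<close> by \<open>s\<^sub>i - s\<^sub>m < 0\<close> into \<open>S(\<theta>)\<close>.\<close>
lemma delta_window_no_earlier_occurrence:
  assumes "s_seq \<theta> m \<le> real a" "real a \<le> s_seq \<theta> n"
    and "s_seq \<theta> m \<le> real b * \<theta>" "real b * \<theta> \<le> s_seq \<theta> n"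
    and "i \<le> m" and same_gaps: "\<forall>t<n - m. delta \<theta> (i + t) = delta \<theta> (m + t)"
  shows "i = m"
proof -
  let ?s = "s_seq \<theta>"
  have translate: "z + (?s i - ?s m) \<in> Sset \<theta>" if z: "z \<in> Sset \<theta>" "?s m \<le> z" "z \<le> ?s n" for z
  proof -
    obtain k where k: "m \<le> k" "k \<le> n" "z = ?s k"
      using Sset_between_s_seq[OF \<theta>_pos z] by blast
    have "?s (i + (k - m)) = z + (?s i - ?s m)"
      using s_seq_shift[OF same_gaps, of "k - m"] k by (simp add: diff_le_mono)
    thus ?thesis using s_seq_in_Sset[OF \<theta>_pos] by metis
  qed
  have "real a \<in> Sset \<theta>" "real b * \<theta> \<in> Sset \<theta>"
    unfolding Sset_iff[OF \<theta>_pos] by (metis add_0_right mult_zero_left of_nat_0, metis add_0 of_nat_0)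
  hence "0 \<le> ?s i - ?s m"
    using Sset_translate_nonneg translate assms(1-4) by blast
  thus "i = m" using \<open>i \<le> m\<close> s_seq_less_iff[OF \<theta>_pos, of i m] by linarith
qed

lemma delta_window_palindromic_unique:
  assumes "1 \<le> n"
  shows "\<exists>m<n. (\<forall>t<n - m. delta \<theta> (m + t) = delta \<theta> (n - 1 - t))
           \<and> (\<forall>i. i + (n - m) \<le> n \<and> (\<forall>t<n - m. delta \<theta> (i + t) = delta \<theta> (m + t)) \<longrightarrow> i = m)"
proof -
  let ?s = "s_seq \<theta>"
  let ?A = "nat \<lfloor>?s n\<rfloor>" and ?B = "nat \<lfloor>?s n / \<theta>\<rfloor>"
  define c where "c = reflection_centre \<theta> (?s n)"
  have ypos: "0 < ?s n"
    using Sset_nonneg[OF \<theta>_pos s_seq_in_Sset[OF \<theta>_pos, of 0]] s_seq_less_iff[OF \<theta>_pos, of 0 n] assms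
    by simp
  have reflect: "c - z \<in> Sset \<theta>" if "z \<in> Sset \<theta>" "z \<le> ?s n" for z
    using reflection_centre_diff_in_Sset that unfolding c_def .
  define m where "m = Sset_rank \<theta> (c - ?s n)"
  have sm: "?s m = c - ?s n"
    unfolding m_def by (rule s_seq_Sset_rank[OF \<theta>_pos reflect]) (simp_all add: s_seq_in_Sset[OF \<theta>_pos])
  have "?s m < ?s n" using reflection_centre_less[OF ypos] sm unfolding c_def by simp
  hence "m < n" using s_seq_less_iff[OF \<theta>_pos] by simp
  have mirror: "c - ?s (m + k) = ?s (n - k)" if "k \<le> n - m" for k
    using s_seq_reflect[OF \<theta>_pos reflect sm that] \<open>m < n\<close> by simp
  have "delta \<theta> (m + t) = delta \<theta> (n - 1 - t)" if "t < n - m" for t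
    using mirror[of t] mirror[of "Suc t"] that
    by (simp add: delta_def Suc_diff_Suc algebra_simps)
  moreover have "i = m" if "i + (n - m) \<le> n" "\<forall>t<n - m. delta \<theta> (i + t) = delta \<theta> (m + t)" for i
  proof (rule delta_window_no_earlier_occurrence)
    show A: "real ?A \<le> ?s n" and B: "real ?B * \<theta> \<le> ?s n"
      using reflection_centre_bounds ypos by simp_all
    show "?s m \<le> real ?A" "?s m \<le> real ?B * \<theta>"
      using A B sm unfolding c_def reflection_centre_def by linarith+
  qed (use that \<open>m < n\<close> in simp_all)
  ultimately show ?thesis using \<open>m < n\<close> by blast
qed

lemma lambda_word_prefix_palindromic_suffix_unique:
  assumes "1 \<le> n"
  shows "\<exists>u. suffix u (map (lambda_word \<theta>) [0..<n]) \<and> u \<noteq> [] \<and> palindrome u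
                 \<and> occ_count u (map (lambda_word \<theta>) [0..<n]) = 1"
proof -
  obtain m where "m < n" and pal: "\<forall>t<n - m. delta \<theta> (m + t) = delta \<theta> (n - 1 - t)"
    and unique: "\<forall>i. i + (n - m) \<le> n \<and> (\<forall>t<n - m. delta \<theta> (i + t) = delta \<theta> (m + t)) \<longrightarrow> i = m"
    using delta_window_palindromic_unique[OF assms] by blast
  let ?L = "lambda_word \<theta>"
  define u where "u = map ?L [m..<n]"
  have window: "take l (drop i (map ?L [0..<n])) = map ?L [i..<i + l]" if "i + l \<le> n" for i l
    using that by (simp add: take_map drop_map)
  have "suffix u (map ?L [0..<n])"
    unfolding u_def using \<open>m < n\<close> upt_add_eq_append[of 0 m "n - m"] by (simp add: suffix_def)
  moreover have "u \<noteq> []" unfolding u_def using \<open>m < n\<close> by simp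
  moreover have "palindrome u"
    unfolding palindrome_def
  proof (rule nth_equalityI)
    fix t assume "t < length (rev u)"
    hence t: "t < n - m" by (simp add: u_def)
    have "delta \<theta> (m + (n - m - 1 - t)) = delta \<theta> (m + t)"
      using pal[rule_format, of "n - m - 1 - t"] t by (simp add: Suc_diff_Suc)
    thus "rev u ! t = u ! t" using t by (simp add: u_def rev_nth lambda_word_eq_iff)
  qed simp
  moreover have "{i. i + length u \<le> n \<and> take (length u) (drop i (map ?L [0..<n])) = u} = {m}"
  proof (intro set_eqI iffI)
    fix i assume "i \<in> {i. i + length u \<le> n \<and> take (length u) (drop i (map ?L [0..<n])) = u}"
    hence i: "i + (n - m) \<le> n" "map ?L [i..<i + (n - m)] = map ?L [m..<n]"
      using window[of i "n - m"] by (auto simp: u_def)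
    have "delta \<theta> (i + t) = delta \<theta> (m + t)" if "t < n - m" for t
      using arg_cong[OF i(2), of "\<lambda>xs. xs ! t"] that by (simp add: lambda_word_eq_iff)
    thus "i \<in> {m}" using unique i(1) by simp
  qed (use \<open>m < n\<close> window[of m "n - m"] in \<open>simp add: u_def\<close>)
  ultimately show ?thesis by (auto simp: occ_count_def)
qed

end

theorem theorem12:
  fixes \<theta> :: real
  assumes "\<theta> \<notin> \<rat>" and "1 < \<theta>" and "\<theta> < 2"
  shows "rich_infinite (lambda_word \<theta>)
     \<and> (\<forall>n\<ge>1. \<exists>u. suffix u (map (lambda_word \<theta>) [0..<n]) \<and> u \<noteq> [] \<and> palindrome u
                 \<and> occ_count u (map (lambda_word \<theta>) [0..<n]) = 1)"
proof -
  have "0 < \<theta>" using assms(2) by simp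
  hence "\<forall>n\<ge>1. \<exists>u. suffix u (map (lambda_word \<theta>) [0..<n]) \<and> u \<noteq> [] \<and> palindrome u
                 \<and> occ_count u (map (lambda_word \<theta>) [0..<n]) = 1"
    using lambda_word_prefix_palindromic_suffix_unique[OF assms(1)] by blast
  thus ?thesis using rich_infinite_if_prefixes_unioccurrent_palindromic_suffix by blast
qed

end
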